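(* Let $i\colon A\hookrightarrow X$ be an embedding and $f\colon A\to B$ a morphism in $\mathbf{MetCH_{sep}}$, and let $\iota_B\colon B\to B+X$, $\iota_X\colon X\to B+X$ be the coproduct injections. Define $\gamma\colon (B+X)\times(B+X)\to[0,\infty]$ by: (1) for $b,b'\in B$: $\gamma(\iota_B(b),\iota_B(b'))=d_B(b,b')$; (2) for $x,x'\in X$: $\gamma(\iota_X(x),\iota_X(x'))=\min\big\{d_X(x,x'),\ \inf_{a,a'\in A}\big(d_X(x,i(a))+d_B(f(a),f(a'))+d_X(i(a'),x')\big)\big\}$; (3) for $b\in B$, $x\in X$: $\gamma(\iota_B(b),\iota_X(x))=\inf_{a\in A}\big(d_B(b,f(a))+d_X(i(a),x)\big)$ and $\gamma(\iota_X(x),\iota_B(b))=\inf_{a\in A}\big(d_X(x,i(a))+d_B(f(a),b)\big)$. Then $\gamma$ is a continuous submetric on $B+X$. Moreover, the quotient $(B+X)/{\sim_\gamma}$, together with the maps $B\to(B+X)/{\sim_\gamma}$ and $X\to(B+X)/{\sim_\gamma}$ obtained by composing $\iota_B$ and $\iota_X$ with the projection, is the pushout of $B\xleftarrow{f}A\xrightarrow{i}X$ in $\mathbf{MetCH_{sep}}$.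
   Context: A metric on a set $X$ is a map $d\colon X\times X\to[0,\infty]$ with $d(x,x)=0$ and $d(x,z)\le d(x,y)+d(y,z)$ (not necessarily symmetric, $\infty$ allowed); separated means $d(x,y)=0=d(y,x)$ implies $x=y$. The upper topology on $[0,\infty]$ has as nonempty proper open sets the sets $]u,\infty]$. A separated metric compact Hausdorff space is a compact Hausdorff space with a separated metric continuous as a map $X\times X\to[0,\infty]$ with the upper topology. $\mathbf{MetCH_{sep}}$: these spaces with continuous non-expansive maps ($d_Y(f(x),f(y))\le d_X(x,y)$). An embedding is an injective morphism $f$ with $d_X(x,y)=d_Y(f(x),f(y))$. The coproduct $B+X$ is the disjoint union with coproduct topology and the metric agreeing with $d_B$, $d_X$ on the summands and equal to $\infty$ between points of different summands. A continuous submetric on a separated metric compact Hausdorff space $(Z,d)$ is a (not necessarily separated) metric $\gamma$ on $Z$, continuous $Z\times Z\to[0,\infty]$ for the upper topology, with $\gamma\le d$ pointwise. For such $\gamma$, $\sim_\gamma$ is the equivalence relation $z\sim_\gamma w\iff\gamma(z,w)=\gamma(w,z)=0$, and $Z/{\sim_\gamma}$ is the quotient set with the quotient topology and metric $([z],[w])\mapsto\gamma(z,w)$; the projection $Z\to Z/{\sim_\gamma}$ is a surjective morphism of $\mathbf{MetCH_{sep}}$. *)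

theory Defs
  imports "HOL-Analysis.Analysis" "HOL-Library.Extended_Nonnegative_Real"
begin

definition upper_ennreal :: "ennreal topology" where
  "upper_ennreal = topology_generated_by (insert UNIV (range greaterThan))"

text \<open>A space is given by a topology T (its carrier is topspace T) and a
  metric d with values in [0,\<infinity>] (not necessarily symmetric).\<close>

definition is_metric_on :: "'a set \<Rightarrow> ('a \<Rightarrow> 'a \<Rightarrow> ennreal) \<Rightarrow> bool" where
  "is_metric_on S d \<longleftrightarrow>
     (\<forall>x\<in>S. d x x = 0) \<and> (\<forall>x\<in>S. \<forall>y\<in>S. \<forall>z\<in>S. d x z \<le> d x y + d y z)"

definition metric_continuous :: "'a topology \<Rightarrow> ('a \<Rightarrow> 'a \<Rightarrow> ennreal) \<Rightarrow> bool" where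
  "metric_continuous T d \<longleftrightarrow>
     continuous_map (prod_topology T T) upper_ennreal (\<lambda>(x, y). d x y)"

definition metCH_sep :: "'a topology \<Rightarrow> ('a \<Rightarrow> 'a \<Rightarrow> ennreal) \<Rightarrow> bool" where
  "metCH_sep T d \<longleftrightarrow>
     compact_space T \<and> Hausdorff_space T \<and> is_metric_on (topspace T) d \<and>
     (\<forall>x\<in>topspace T. \<forall>y\<in>topspace T. d x y = 0 \<and> d y x = 0 \<longrightarrow> x = y) \<and>
     metric_continuous T d"

definition met_morphism ::
  "'a topology \<Rightarrow> ('a \<Rightarrow> 'a \<Rightarrow> ennreal) \<Rightarrow> 'b topology \<Rightarrow> ('b \<Rightarrow> 'b \<Rightarrow> ennreal) \<Rightarrow> ('a \<Rightarrow> 'b) \<Rightarrow> bool"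
  where
  "met_morphism T d S e f \<longleftrightarrow>
     continuous_map T S f \<and> (\<forall>x\<in>topspace T. \<forall>y\<in>topspace T. e (f x) (f y) \<le> d x y)"

definition met_embedding ::
  "'a topology \<Rightarrow> ('a \<Rightarrow> 'a \<Rightarrow> ennreal) \<Rightarrow> 'b topology \<Rightarrow> ('b \<Rightarrow> 'b \<Rightarrow> ennreal) \<Rightarrow> ('a \<Rightarrow> 'b) \<Rightarrow> bool"
  where
  "met_embedding T d S e f \<longleftrightarrow>
     met_morphism T d S e f \<and> inj_on f (topspace T) \<and>
     (\<forall>x\<in>topspace T. \<forall>y\<in>topspace T. e (f x) (f y) = d x y)"

definition coprod_top :: "'b topology \<Rightarrow> 'x topology \<Rightarrow> ('b + 'x) topology" where
  "coprod_top TB TX = topology (\<lambda>U. U \<subseteq> Inl ` topspace TB \<union> Inr ` topspace TX \<and>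
       openin TB (Inl -` U) \<and> openin TX (Inr -` U))"

lemma istopology_coprod:
  "istopology (\<lambda>U. U \<subseteq> Inl ` topspace TB \<union> Inr ` topspace TX \<and>
       openin TB (Inl -` U) \<and> openin TX (Inr -` U))"
  unfolding istopology_def
  by (auto simp: vimage_Union intro!: openin_Union)

lemma openin_coprod_top:
  "openin (coprod_top TB TX) U \<longleftrightarrow> U \<subseteq> Inl ` topspace TB \<union> Inr ` topspace TX \<and>
       openin TB (Inl -` U) \<and> openin TX (Inr -` U)"
  unfolding coprod_top_def by (simp add: topology_inverse'[OF istopology_coprod])

fun coprod_met :: "('b \<Rightarrow> 'b \<Rightarrow> ennreal) \<Rightarrow> ('x \<Rightarrow> 'x \<Rightarrow> ennreal) \<Rightarrow> 'b + 'x \<Rightarrow> 'b + 'x \<Rightarrow> ennreal" where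
  "coprod_met dB dX (Inl b) (Inl b') = dB b b'"
| "coprod_met dB dX (Inr x) (Inr x') = dX x x'"
| "coprod_met dB dX (Inl b) (Inr x) = \<infinity>"
| "coprod_met dB dX (Inr x) (Inl b) = \<infinity>"

definition continuous_submetric :: "'a topology \<Rightarrow> ('a \<Rightarrow> 'a \<Rightarrow> ennreal) \<Rightarrow> ('a \<Rightarrow> 'a \<Rightarrow> ennreal) \<Rightarrow> bool" where
  "continuous_submetric T d \<gamma> \<longleftrightarrow>
     is_metric_on (topspace T) \<gamma> \<and> metric_continuous T \<gamma> \<and>
     (\<forall>x\<in>topspace T. \<forall>y\<in>topspace T. \<gamma> x y \<le> d x y)"

definition qclass :: "'a set \<Rightarrow> ('a \<Rightarrow> 'a \<Rightarrow> ennreal) \<Rightarrow> 'a \<Rightarrow> 'a set" where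
  "qclass S \<gamma> z = {w \<in> S. \<gamma> z w = 0 \<and> \<gamma> w z = 0}"

definition quot_top :: "'a topology \<Rightarrow> ('a \<Rightarrow> 'a \<Rightarrow> ennreal) \<Rightarrow> 'a set topology" where
  "quot_top T \<gamma> = topology (\<lambda>U. U \<subseteq> qclass (topspace T) \<gamma> ` topspace T \<and>
       openin T {z \<in> topspace T. qclass (topspace T) \<gamma> z \<in> U})"

lemma istopology_quot:
  "istopology (\<lambda>U. U \<subseteq> qclass (topspace T) \<gamma> ` topspace T \<and>
       openin T {z \<in> topspace T. qclass (topspace T) \<gamma> z \<in> U})"
proof -
  have 1: "{z \<in> topspace T. q z \<in> \<Union>K} = \<Union>((\<lambda>U. {z \<in> topspace T. q z \<in> U}) ` K)"
    for q :: "'a \<Rightarrow> 'a set" and K by auto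
  have 2: "{z \<in> topspace T. q z \<in> U \<inter> V} = {z \<in> topspace T. q z \<in> U} \<inter> {z \<in> topspace T. q z \<in> V}"
    for q :: "'a \<Rightarrow> 'a set" and U V by auto
  show ?thesis unfolding istopology_def
    by (auto simp only: 1 2 intro!: openin_Union openin_Int)
qed

definition quot_met :: "('a \<Rightarrow> 'a \<Rightarrow> ennreal) \<Rightarrow> 'a set \<Rightarrow> 'a set \<Rightarrow> ennreal" where
  "quot_met \<gamma> c c' = \<gamma> (SOME z. z \<in> c) (SOME w. w \<in> c')"

fun gamma_po ::
  "'a set \<Rightarrow> ('a \<Rightarrow> 'a \<Rightarrow> ennreal) \<Rightarrow> ('b \<Rightarrow> 'b \<Rightarrow> ennreal) \<Rightarrow> ('x \<Rightarrow> 'x \<Rightarrow> ennreal)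
   \<Rightarrow> ('a \<Rightarrow> 'b) \<Rightarrow> ('a \<Rightarrow> 'x) \<Rightarrow> 'b + 'x \<Rightarrow> 'b + 'x \<Rightarrow> ennreal" where
  "gamma_po A dA dB dX f i (Inl b) (Inl b') = dB b b'"
| "gamma_po A dA dB dX f i (Inr x) (Inr x') =
     min (dX x x') (INF a\<in>A. INF a'\<in>A. dX x (i a) + dB (f a) (f a') + dX (i a') x')"
| "gamma_po A dA dB dX f i (Inl b) (Inr x) = (INF a\<in>A. dB b (f a) + dX (i a) x)"
| "gamma_po A dA dB dX f i (Inr x) (Inl b) = (INF a\<in>A. dX x (i a) + dB (f a) b)"

end

theory Submission
  imports Defs
begin

(* The four clauses defining gamma are one formula: gamma z w is the minimum of the coproduct
   distance and the detour from z to the glued copy of some a, through B from f a to f a', and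
   from the glued copy of a' to w. Triangle inequalities for detours come down to
   d_B(f a, f a') <= d_X(i a, x) + d_X(x, i a'), i.e. to f being non-expansive along the
   isometry i. Continuity holds because an infimum over the compact space A of a lower
   semicontinuous function is lower semicontinuous. The quotient of a compact Hausdorff space by
   a continuous pseudometric is compact Hausdorff, as saturations of closed sets are projections
   of closed sets along a compact factor, so the projection is a closed map. Finally any cocone
   (g, h) yields a map on B + X that is non-expansive for gamma, and such maps factor uniquely
   through the quotient. *)

lemma ennreal_less_add_left_approx:
  fixes u a b :: ennreal
  assumes "u < a + b" and "0 < a"
  obtains s where "s < a" and "u < s + b"
proof -
  have "((\<lambda>s. s + b) \<longlongrightarrow> a + b) (at_left a)"
    by (intro tendsto_intros)
  then have "eventually (\<lambda>s. u < s + b) (at_left a)"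
    using assms(1) by (rule order_tendstoD)
  then obtain y where "y < a" and y: "\<And>s. y < s \<Longrightarrow> s < a \<Longrightarrow> u < s + b"
    unfolding eventually_at_left[OF assms(2)] by blast
  with dense[OF \<open>y < a\<close>] that show ?thesis by blast
qed

lemma ennreal_less_add_iff:
  fixes u a b :: ennreal
  shows "u < a + b \<longleftrightarrow> u < a \<or> u < b \<or> (\<exists>s t. s < a \<and> t < b \<and> u \<le> s + t)"
proof
  assume u: "u < a + b"
  show "u < a \<or> u < b \<or> (\<exists>s t. s < a \<and> t < b \<and> u \<le> s + t)"
  proof (cases "a = 0 \<or> b = 0")
    case False
    then obtain s where "s < a" "u < s + b"
      using ennreal_less_add_left_approx[OF u] by (auto simp: zero_less_iff_neq_zero)
    moreover from this(2) False obtain t where "t < b" "u < s + t"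
      using ennreal_less_add_left_approx[of u b s] by (auto simp: add.commute zero_less_iff_neq_zero)
    ultimately show ?thesis by (blast intro: less_imp_le)
  qed (use u in auto)
next
  show "u < a \<or> u < b \<or> (\<exists>s t. s < a \<and> t < b \<and> u \<le> s + t) \<Longrightarrow> u < a + b"
    by (elim disjE exE conjE) (simp_all add: less_le_trans[OF _ add_increasing2]
      less_le_trans[OF _ add_increasing] le_less_trans[OF _ add_strict_mono])
qed

lemma INF_add_const_ennreal:
  fixes g :: "'i \<Rightarrow> ennreal"
  shows "(INF k\<in>I. g k + c) = (INF k\<in>I. g k) + c"
proof (cases "I = {}")
  case False
  then show ?thesis
    using continuous_at_Inf_mono[of "\<lambda>x. x + c" "g ` I"]
      continuous_add[of "at_right (Inf (g ` I))" "\<lambda>x. x" "\<lambda>x. c"]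
    by (auto simp: mono_def image_comp)
qed simp

lemma le_INF_add_ennreal:
  fixes y c :: ennreal
  assumes "\<And>k. k \<in> I \<Longrightarrow> y \<le> g k + c"
  shows "y \<le> (INF k\<in>I. g k) + c"
  using INF_greatest[of I y "\<lambda>k. g k + c"] assms by (simp add: INF_add_const_ennreal)

lemma le_add_INF_ennreal:
  fixes y c :: ennreal
  assumes "\<And>k. k \<in> I \<Longrightarrow> y \<le> c + g k"
  shows "y \<le> c + (INF k\<in>I. g k)"
  using le_INF_add_ennreal[of I y g c] assms by (simp add: add.commute)

lemma INF_INF_eq_INF_diagonal:
  fixes g :: "'i \<Rightarrow> 'i \<Rightarrow> 'c::complete_lattice"
  assumes "\<And>a a'. a \<in> I \<Longrightarrow> a' \<in> I \<Longrightarrow> \<exists>a''\<in>I. g a'' a'' \<le> g a a'"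
  shows "(INF a\<in>I. INF a'\<in>I. g a a') = (INF a\<in>I. g a a)"
proof (rule antisym)
  show "(INF a\<in>I. INF a'\<in>I. g a a') \<le> (INF a\<in>I. g a a)"
  proof (rule INF_mono)
    fix a assume "a \<in> I"
    then show "\<exists>a2\<in>I. (INF a'\<in>I. g a2 a') \<le> g a a"
      by (intro bexI[of _ a] INF_lower)
  qed
  show "(INF a\<in>I. g a a) \<le> (INF a\<in>I. INF a'\<in>I. g a a')"
  proof (intro INF_greatest)
    fix a a' assume "a \<in> I" "a' \<in> I"
    with assms obtain a'' where "a'' \<in> I" "g a'' a'' \<le> g a a'"
      by blast
    then show "(INF a\<in>I. g a a) \<le> g a a'"
      by (blast intro: order_trans[OF INF_lower])
  qed
qed

lemma le_min_add_min:
  fixes y :: "'a::{linorder, plus}"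
  shows "y \<le> p + r \<Longrightarrow> y \<le> p + s \<Longrightarrow> y \<le> q + r \<Longrightarrow> y \<le> q + s \<Longrightarrow> y \<le> min p q + min r s"
  by (simp add: min_def)

section \<open>Lower semicontinuous functions\<close>

lemma topspace_upper_ennreal [simp]: "topspace upper_ennreal = UNIV"
  unfolding upper_ennreal_def by auto

lemma continuous_map_upper_ennreal_iff:
  "continuous_map T upper_ennreal \<phi> \<longleftrightarrow> (\<forall>u. openin T {p \<in> topspace T. u < \<phi> p})"
proof (intro iffI allI)
  fix u :: ennreal
  assume \<phi>: "continuous_map T upper_ennreal \<phi>"
  have "openin upper_ennreal {u<..}"
    unfolding upper_ennreal_def by (rule topology_generated_by_Basis) auto
  from openin_continuous_map_preimage[OF \<phi> this] show "openin T {p \<in> topspace T. u < \<phi> p}"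
    by simp
next
  assume sup_open: "\<forall>u. openin T {p \<in> topspace T. u < \<phi> p}"
  have "openin T {p \<in> topspace T. \<phi> p \<in> U}"
    if "generate_topology_on (insert UNIV (range greaterThan)) U" for U
    using that
  proof induction
    case (Int a b)
    have "{p \<in> topspace T. \<phi> p \<in> a \<inter> b} = {p \<in> topspace T. \<phi> p \<in> a} \<inter> {p \<in> topspace T. \<phi> p \<in> b}"
      by auto
    with Int show ?case by (simp add: openin_Int)
  next
    case (UN K)
    have "{p \<in> topspace T. \<phi> p \<in> \<Union>K} = (\<Union>k\<in>K. {p \<in> topspace T. \<phi> p \<in> k})"
      by auto
    with UN show ?case by (auto intro!: openin_Union)
  next
    case (Basis s)
    with sup_open show ?case by auto
  qed simp
  then show "continuous_map T upper_ennreal \<phi>"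
    unfolding continuous_map upper_ennreal_def by (simp add: openin_topology_generated_by)
qed

lemma continuous_map_upper_ennreal_iff_closedin:
  "continuous_map T upper_ennreal \<phi> \<longleftrightarrow> (\<forall>u. closedin T {p \<in> topspace T. \<phi> p \<le> u})"
proof -
  have "topspace T - {p \<in> topspace T. \<phi> p \<le> u} = {p \<in> topspace T. u < \<phi> p}" for u
    by (auto simp: not_le)
  then show ?thesis
    unfolding continuous_map_upper_ennreal_iff closedin_def by auto
qed

lemma closedin_upper_ennreal_zero_set:
  "continuous_map T upper_ennreal \<phi> \<Longrightarrow> closedin T {p \<in> topspace T. \<phi> p = 0}"
  using continuous_map_upper_ennreal_iff_closedin[of T \<phi>] by (simp flip: le_zero_eq)

lemma continuous_map_upper_ennreal_min:
  assumes "continuous_map T upper_ennreal \<phi>" and "continuous_map T upper_ennreal \<psi>"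
  shows "continuous_map T upper_ennreal (\<lambda>p. min (\<phi> p) (\<psi> p))"
proof -
  have "{p \<in> topspace T. min (\<phi> p) (\<psi> p) \<le> u} =
      {p \<in> topspace T. \<phi> p \<le> u} \<union> {p \<in> topspace T. \<psi> p \<le> u}" for u
    by (auto simp: min_le_iff_disj)
  with assms show ?thesis
    unfolding continuous_map_upper_ennreal_iff_closedin by (simp add: closedin_Un)
qed

lemma continuous_map_upper_ennreal_add:
  assumes "continuous_map T upper_ennreal \<phi>" and "continuous_map T upper_ennreal \<psi>"
  shows "continuous_map T upper_ennreal (\<lambda>p. \<phi> p + \<psi> p)"
proof -
  let ?sup = "\<lambda>g u. {p \<in> topspace T. u < g p}"
  have "?sup (\<lambda>p. \<phi> p + \<psi> p) u = ?sup \<phi> u \<union> ?sup \<psi> u \<union>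
      (\<Union>(s, t)\<in>{(s, t). u \<le> s + t}. ?sup \<phi> s \<inter> ?sup \<psi> t)" for u
    unfolding ennreal_less_add_iff by blast
  with assms show ?thesis
    unfolding continuous_map_upper_ennreal_iff by (auto intro!: openin_Un openin_Union openin_Int)
qed

lemma continuous_map_upper_ennreal_INF:
  assumes K: "compact_space K"
    and \<phi>: "continuous_map (prod_topology P K) upper_ennreal (\<lambda>(p, k). \<phi> p k)"
  shows "continuous_map P upper_ennreal (\<lambda>p. INF k\<in>topspace K. \<phi> p k)"
  unfolding continuous_map_upper_ennreal_iff
proof
  fix u :: ennreal
  \<comment> \<open>The sublevel sets of the infimum are projections of closed sets along the compact factor.\<close>
  define C where "C v = {pk \<in> topspace P \<times> topspace K. \<phi> (fst pk) (snd pk) \<le> v}" for v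
  have "closedin (prod_topology P K) (C v)" for v
    using \<phi> unfolding C_def continuous_map_upper_ennreal_iff_closedin by (simp add: case_prod_unfold)
  then have "closedin P (fst ` C v)" for v
    using closed_map_fst[OF K, of P] by (simp add: closed_map_def)
  then have open_v: "openin P (topspace P - fst ` C v)" for v
    by (simp add: openin_diff)
  have "{p \<in> topspace P. u < (INF k\<in>topspace K. \<phi> p k)} = (\<Union>v\<in>{u<..}. topspace P - fst ` C v)"
  proof (intro set_eqI iffI)
    fix p assume "p \<in> {p \<in> topspace P. u < (INF k\<in>topspace K. \<phi> p k)}"
    then obtain v where "p \<in> topspace P" "u < v" "v < (INF k\<in>topspace K. \<phi> p k)"
      using dense by blast
    moreover have "p \<notin> fst ` C v"
      using calculation(3) by (force simp: C_def dest: INF_lower2[of _ _ "\<phi> p"])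
    ultimately show "p \<in> (\<Union>v\<in>{u<..}. topspace P - fst ` C v)" by blast
  next
    fix p assume "p \<in> (\<Union>v\<in>{u<..}. topspace P - fst ` C v)"
    then obtain v where "u < v" "p \<in> topspace P" "p \<notin> fst ` C v" by blast
    then have "v < \<phi> p k" if "k \<in> topspace K" for k
      using that unfolding C_def by (force simp: not_le)
    then have "v \<le> (INF k\<in>topspace K. \<phi> p k)"
      by (auto intro: INF_greatest less_imp_le)
    with \<open>u < v\<close> \<open>p \<in> topspace P\<close> show "p \<in> {p \<in> topspace P. u < (INF k\<in>topspace K. \<phi> p k)}"
      by (auto intro: less_le_trans)
  qed
  then show "openin P {p \<in> topspace P. u < (INF k\<in>topspace K. \<phi> p k)}"
    by (simp only:) (use open_v in \<open>blast intro: openin_Union\<close>)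
qed

lemma metric_continuous_compose:
  assumes "metric_continuous T d" and "continuous_map P T g" and "continuous_map P T h"
  shows "continuous_map P upper_ennreal (\<lambda>p. d (g p) (h p))"
  using continuous_map_compose[OF continuous_map_pairedI[OF assms(2,3)] assms(1)[unfolded metric_continuous_def]]
  by (simp add: o_def)

lemma metCH_sep_self: "metCH_sep T d \<Longrightarrow> x \<in> topspace T \<Longrightarrow> d x x = 0"
  unfolding metCH_sep_def is_metric_on_def by blast

lemma metCH_sep_triangle:
  "metCH_sep T d \<Longrightarrow> x \<in> topspace T \<Longrightarrow> y \<in> topspace T \<Longrightarrow> z \<in> topspace T \<Longrightarrow> d x z \<le> d x y + d y z"
  unfolding metCH_sep_def is_metric_on_def by blast

lemma met_morphism_in_topspace:
  "met_morphism T d S e \<phi> \<Longrightarrow> x \<in> topspace T \<Longrightarrow> \<phi> x \<in> topspace S"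
  unfolding met_morphism_def using continuous_map_image_subset_topspace by blast

lemma met_morphism_le:
  "met_morphism T d S e \<phi> \<Longrightarrow> x \<in> topspace T \<Longrightarrow> y \<in> topspace T \<Longrightarrow> e (\<phi> x) (\<phi> y) \<le> d x y"
  unfolding met_morphism_def by blast

lemma is_metric_on_coprod_met:
  "is_metric_on SB dB \<Longrightarrow> is_metric_on SX dX \<Longrightarrow> is_metric_on (Inl ` SB \<union> Inr ` SX) (coprod_met dB dX)"
  unfolding is_metric_on_def by auto

section \<open>The coproduct of two spaces\<close>

lemma vimage_Inr_image_Inl [simp]: "Inr -` Inl ` U = {}"
  and vimage_Inl_image_Inr [simp]: "Inl -` Inr ` V = {}"
  by auto

lemma topspace_coprod_top:
  "topspace (coprod_top TB TX) = Inl ` topspace TB \<union> Inr ` topspace TX"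
proof -
  have "openin (coprod_top TB TX) (Inl ` topspace TB \<union> Inr ` topspace TX)"
    unfolding openin_coprod_top by (simp add: vimage_Un inj_vimage_image_eq)
  then show ?thesis
    using openin_subset unfolding topspace_def openin_coprod_top by blast
qed

lemma open_map_Inl: "open_map TB (coprod_top TB TX) Inl"
  unfolding open_map_def openin_coprod_top
  by (auto simp: inj_vimage_image_eq dest: openin_subset)

lemma open_map_Inr: "open_map TX (coprod_top TB TX) Inr"
  unfolding open_map_def openin_coprod_top
  by (auto simp: inj_vimage_image_eq dest: openin_subset)

lemma continuous_map_Inl: "continuous_map TB (coprod_top TB TX) Inl"
  unfolding continuous_map openin_coprod_top
  by (auto simp: topspace_coprod_top elim!: rev_iffD1[OF _ arg_cong[where f = "openin TB"]] dest: openin_subset)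

lemma continuous_map_Inr: "continuous_map TX (coprod_top TB TX) Inr"
  unfolding continuous_map openin_coprod_top
  by (auto simp: topspace_coprod_top elim!: rev_iffD1[OF _ arg_cong[where f = "openin TX"]] dest: openin_subset)

lemma continuous_map_case_sum:
  assumes "continuous_map TB Y g" and "continuous_map TX Y h"
  shows "continuous_map (coprod_top TB TX) Y (case_sum g h)"
  unfolding continuous_map
proof (intro conjI allI impI)
  show "case_sum g h ` topspace (coprod_top TB TX) \<subseteq> topspace Y"
    using assms by (auto simp: topspace_coprod_top continuous_map_def)
  fix U assume "openin Y U"
  then have "openin TB {b \<in> topspace TB. g b \<in> U}" "openin TX {x \<in> topspace TX. h x \<in> U}"
    using assms by (simp_all add: openin_continuous_map_preimage)
  moreover have "Inl -` {z \<in> topspace (coprod_top TB TX). case_sum g h z \<in> U} = {b \<in> topspace TB. g b \<in> U}"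
    and "Inr -` {z \<in> topspace (coprod_top TB TX). case_sum g h z \<in> U} = {x \<in> topspace TX. h x \<in> U}"
    by (auto simp: topspace_coprod_top)
  ultimately show "openin (coprod_top TB TX) {z \<in> topspace (coprod_top TB TX). case_sum g h z \<in> U}"
    unfolding openin_coprod_top by (auto simp: topspace_coprod_top)
qed

lemma compact_space_coprod_top:
  assumes "compact_space TB" and "compact_space TX"
  shows "compact_space (coprod_top TB TX)"
  using compactin_Un[OF image_compactin[OF _ continuous_map_Inl] image_compactin[OF _ continuous_map_Inr]] assms
  unfolding compact_space_def topspace_coprod_top by blast

lemma Hausdorff_space_coprod_top:
  assumes HB: "Hausdorff_space TB" and HX: "Hausdorff_space TX"
  shows "Hausdorff_space (coprod_top TB TX)"
  unfolding Hausdorff_space_def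
proof (intro allI impI, elim conjE)
  fix z w
  assume z: "z \<in> topspace (coprod_top TB TX)" and w: "w \<in> topspace (coprod_top TB TX)" and "z \<noteq> w"
  have sides: "openin (coprod_top TB TX) (Inl ` topspace TB)" "openin (coprod_top TB TX) (Inr ` topspace TX)"
    using open_map_Inl open_map_Inr unfolding open_map_def by blast+
  show "\<exists>U V. openin (coprod_top TB TX) U \<and> openin (coprod_top TB TX) V \<and> z \<in> U \<and> w \<in> V \<and> disjnt U V"
  proof (cases z; cases w)
    fix b b' assume "z = Inl b" "w = Inl b'"
    with z w \<open>z \<noteq> w\<close> obtain U V where "openin TB U" "openin TB V" "b \<in> U" "b' \<in> V" "disjnt U V"
      using HB unfolding Hausdorff_space_def topspace_coprod_top by blast
    with \<open>z = Inl b\<close> \<open>w = Inl b'\<close> open_map_Inl show ?thesis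
      unfolding open_map_def disjnt_def by (intro exI[of _ "Inl ` U"] exI[of _ "Inl ` V"]) auto
  next
    fix x x' assume "z = Inr x" "w = Inr x'"
    with z w \<open>z \<noteq> w\<close> obtain U V where "openin TX U" "openin TX V" "x \<in> U" "x' \<in> V" "disjnt U V"
      using HX unfolding Hausdorff_space_def topspace_coprod_top by blast
    with \<open>z = Inr x\<close> \<open>w = Inr x'\<close> open_map_Inr show ?thesis
      unfolding open_map_def disjnt_def by (intro exI[of _ "Inr ` U"] exI[of _ "Inr ` V"]) auto
  qed (use z w sides in \<open>auto simp: topspace_coprod_top disjnt_def\<close>)
qed

lemma open_map_box_neighbourhood:
  assumes "continuous_map (prod_topology T1 T2) Y (\<lambda>(p, q). \<phi> (e1 p) (e2 q))"
    and "open_map T1 Z1 e1" and "open_map T2 Z2 e2" and "openin Y V"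
    and "p \<in> topspace T1" and "q \<in> topspace T2" and "\<phi> (e1 p) (e2 q) \<in> V"
  shows "\<exists>U W. openin Z1 U \<and> openin Z2 W \<and> e1 p \<in> U \<and> e2 q \<in> W \<and> (\<forall>z\<in>U. \<forall>w\<in>W. \<phi> z w \<in> V)"
proof -
  have "openin (prod_topology T1 T2) {pq \<in> topspace (prod_topology T1 T2). (\<lambda>(p, q). \<phi> (e1 p) (e2 q)) pq \<in> V}"
    using assms(1,4) by (rule openin_continuous_map_preimage)
  moreover have "(p, q) \<in> {pq \<in> topspace (prod_topology T1 T2). (\<lambda>(p, q). \<phi> (e1 p) (e2 q)) pq \<in> V}"
    using assms(5-7) by simp
  ultimately obtain U W where "openin T1 U" "openin T2 W" "p \<in> U" "q \<in> W"
    and "U \<times> W \<subseteq> {pq \<in> topspace (prod_topology T1 T2). (\<lambda>(p, q). \<phi> (e1 p) (e2 q)) pq \<in> V}"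
    unfolding openin_prod_topology_alt by meson
  with assms(2,3) show ?thesis
    unfolding open_map_def by (intro exI[of _ "e1 ` U"] exI[of _ "e2 ` W"]) auto
qed

lemma continuous_map_prod_coprod_top:
  fixes \<phi> :: "'b + 'x \<Rightarrow> 'b + 'x \<Rightarrow> 'y"
  assumes LL: "continuous_map (prod_topology TB TB) Y (\<lambda>(b, b'). \<phi> (Inl b) (Inl b'))"
    and LR: "continuous_map (prod_topology TB TX) Y (\<lambda>(b, x). \<phi> (Inl b) (Inr x))"
    and RL: "continuous_map (prod_topology TX TB) Y (\<lambda>(x, b). \<phi> (Inr x) (Inl b))"
    and RR: "continuous_map (prod_topology TX TX) Y (\<lambda>(x, x'). \<phi> (Inr x) (Inr x'))"
  shows "continuous_map (prod_topology (coprod_top TB TX) (coprod_top TB TX)) Y (\<lambda>(z, w). \<phi> z w)"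
  unfolding continuous_map
proof (intro conjI allI impI)
  let ?Z = "coprod_top TB TX"
  have "\<phi> z w \<in> topspace Y" if "z \<in> topspace ?Z" "w \<in> topspace ?Z" for z w
    using that continuous_map_image_subset_topspace[OF LL] continuous_map_image_subset_topspace[OF LR]
      continuous_map_image_subset_topspace[OF RL] continuous_map_image_subset_topspace[OF RR]
    by (cases z; cases w) (auto simp: topspace_coprod_top image_subset_iff)
  then show "(\<lambda>(z, w). \<phi> z w) ` topspace (prod_topology ?Z ?Z) \<subseteq> topspace Y"
    by auto
  fix V assume V: "openin Y V"
  have box: "\<exists>U W. openin ?Z U \<and> openin ?Z W \<and> z \<in> U \<and> w \<in> W \<and> (\<forall>z\<in>U. \<forall>w\<in>W. \<phi> z w \<in> V)"
    if "z \<in> topspace ?Z" "w \<in> topspace ?Z" "\<phi> z w \<in> V" for z w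
    using that open_map_box_neighbourhood[OF LL open_map_Inl open_map_Inl V]
      open_map_box_neighbourhood[OF LR open_map_Inl open_map_Inr V]
      open_map_box_neighbourhood[OF RL open_map_Inr open_map_Inl V]
      open_map_box_neighbourhood[OF RR open_map_Inr open_map_Inr V]
    by (cases z; cases w) (auto simp: topspace_coprod_top)
  show "openin (prod_topology ?Z ?Z) {p \<in> topspace (prod_topology ?Z ?Z). (\<lambda>(z, w). \<phi> z w) p \<in> V}"
    unfolding openin_prod_topology_alt
  proof (intro allI impI)
    fix z w assume "(z, w) \<in> {p \<in> topspace (prod_topology ?Z ?Z). (\<lambda>(z, w). \<phi> z w) p \<in> V}"
    then have "z \<in> topspace ?Z" "w \<in> topspace ?Z" "\<phi> z w \<in> V"
      by auto
    from box[OF this] obtain U W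
      where "openin ?Z U" "openin ?Z W" "z \<in> U" "w \<in> W" "\<forall>z\<in>U. \<forall>w\<in>W. \<phi> z w \<in> V"
      by blast
    then show "\<exists>U W. openin ?Z U \<and> openin ?Z W \<and> z \<in> U \<and> w \<in> W \<and>
        U \<times> W \<subseteq> {p \<in> topspace (prod_topology ?Z ?Z). (\<lambda>(z, w). \<phi> z w) p \<in> V}"
      by (intro exI[of _ U] exI[of _ W]) (auto dest: openin_subset)
  qed
qed

section \<open>Quotient by a continuous pseudometric\<close>

lemma openin_quot_top:
  "openin (quot_top T \<gamma>) U \<longleftrightarrow> U \<subseteq> qclass (topspace T) \<gamma> ` topspace T \<and>
     openin T {z \<in> topspace T. qclass (topspace T) \<gamma> z \<in> U}"
  unfolding quot_top_def by (simp add: topology_inverse'[OF istopology_quot])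

lemma topspace_quot_top: "topspace (quot_top T \<gamma>) = qclass (topspace T) \<gamma> ` topspace T"
proof -
  have "{z \<in> topspace T. qclass (topspace T) \<gamma> z \<in> qclass (topspace T) \<gamma> ` topspace T} = topspace T"
    by blast
  then have "openin (quot_top T \<gamma>) (qclass (topspace T) \<gamma> ` topspace T)"
    unfolding openin_quot_top by simp
  then show ?thesis
    using openin_subset unfolding topspace_def openin_quot_top by blast
qed

lemma quotient_map_qclass: "quotient_map T (quot_top T \<gamma>) (qclass (topspace T) \<gamma>)"
  unfolding quotient_map_def topspace_quot_top openin_quot_top by auto

locale compact_pseudometric_space =
  fixes T :: "'z topology" and \<gamma> :: "'z \<Rightarrow> 'z \<Rightarrow> ennreal"
  assumes compact: "compact_space T" and Hausdorff: "Hausdorff_space T"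
    and metric: "is_metric_on (topspace T) \<gamma>" and continuous: "metric_continuous T \<gamma>"
begin

abbreviation proj :: "'z \<Rightarrow> 'z set" where
  "proj \<equiv> qclass (topspace T) \<gamma>"

lemma metric_self [simp]: "z \<in> topspace T \<Longrightarrow> \<gamma> z z = 0"
  using metric unfolding is_metric_on_def by blast

lemma metric_triangle:
  "x \<in> topspace T \<Longrightarrow> y \<in> topspace T \<Longrightarrow> z \<in> topspace T \<Longrightarrow> \<gamma> x z \<le> \<gamma> x y + \<gamma> y z"
  using metric unfolding is_metric_on_def by blast

lemma metric_zero_trans:
  "x \<in> topspace T \<Longrightarrow> y \<in> topspace T \<Longrightarrow> z \<in> topspace T \<Longrightarrow> \<gamma> x y = 0 \<Longrightarrow> \<gamma> y z = 0 \<Longrightarrow> \<gamma> x z = 0"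
  using metric_triangle[of x y z] by simp

lemma metric_indistinguishable_cong:
  assumes "z \<in> topspace T" "z' \<in> topspace T" "w \<in> topspace T" "w' \<in> topspace T"
    and "\<gamma> z z' = 0" "\<gamma> z' z = 0" "\<gamma> w w' = 0" "\<gamma> w' w = 0"
  shows "\<gamma> z' w' = \<gamma> z w"
proof (rule antisym)
  have "\<gamma> z' w' \<le> \<gamma> z' z + \<gamma> z w'"
    using assms(1-4) by (intro metric_triangle)
  also have "\<dots> \<le> \<gamma> z' z + (\<gamma> z w + \<gamma> w w')"
    using assms(1-4) by (intro add_left_mono metric_triangle)
  finally show "\<gamma> z' w' \<le> \<gamma> z w"
    using assms by simp
  have "\<gamma> z w \<le> \<gamma> z z' + \<gamma> z' w"
    using assms(1-4) by (intro metric_triangle)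
  also have "\<dots> \<le> \<gamma> z z' + (\<gamma> z' w' + \<gamma> w' w)"
    using assms(1-4) by (intro add_left_mono metric_triangle)
  finally show "\<gamma> z w \<le> \<gamma> z' w'"
    using assms by simp
qed

lemma proj_eq_iff:
  assumes "z \<in> topspace T" "w \<in> topspace T"
  shows "proj z = proj w \<longleftrightarrow> \<gamma> z w = 0 \<and> \<gamma> w z = 0"
proof
  assume "proj z = proj w"
  moreover have "w \<in> proj w"
    using assms by (simp add: qclass_def)
  ultimately have "w \<in> proj z"
    by simp
  then show "\<gamma> z w = 0 \<and> \<gamma> w z = 0"
    by (simp add: qclass_def)
next
  assume "\<gamma> z w = 0 \<and> \<gamma> w z = 0"
  with assms show "proj z = proj w"
    unfolding qclass_def by (blast intro: metric_zero_trans)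
qed

lemma some_mem_proj: "z \<in> topspace T \<Longrightarrow> (SOME z'. z' \<in> proj z) \<in> proj z"
  by (rule someI[where x = z]) (simp add: qclass_def)

lemma quot_met_proj:
  assumes "z \<in> topspace T" and "w \<in> topspace T"
  shows "quot_met \<gamma> (proj z) (proj w) = \<gamma> z w"
  using some_mem_proj[OF assms(1)] some_mem_proj[OF assms(2)] assms
  unfolding quot_met_def qclass_def mem_Collect_eq
  by (intro metric_indistinguishable_cong) blast+

lemma closedin_saturation:
  assumes C: "closedin T C"
  shows "closedin T {w \<in> topspace T. \<exists>z\<in>C. \<gamma> z w = 0 \<and> \<gamma> w z = 0}"
proof -
  let ?R = "{p \<in> topspace (prod_topology T T). \<gamma> (fst p) (snd p) = 0} \<inter>
    {p \<in> topspace (prod_topology T T). \<gamma> (snd p) (fst p) = 0}"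
  have "closedin (prod_topology T T) ?R"
    by (intro closedin_Int closedin_upper_ennreal_zero_set metric_continuous_compose[OF continuous]
        continuous_map_fst continuous_map_snd)
  moreover have "closedin (prod_topology T T) (C \<times> topspace T)"
    using C by (simp add: closedin_prod_Times_iff)
  ultimately have "closedin T (snd ` (?R \<inter> C \<times> topspace T))"
    using closed_map_snd[OF compact, of T] unfolding closed_map_def by (blast intro: closedin_Int)
  moreover have "snd ` (?R \<inter> C \<times> topspace T) = {w \<in> topspace T. \<exists>z\<in>C. \<gamma> z w = 0 \<and> \<gamma> w z = 0}"
  proof (intro set_eqI iffI)
    fix w assume "w \<in> {w \<in> topspace T. \<exists>z\<in>C. \<gamma> z w = 0 \<and> \<gamma> w z = 0}"
    then obtain z where "z \<in> C" "w \<in> topspace T" "\<gamma> z w = 0" "\<gamma> w z = 0"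
      by blast
    moreover have "z \<in> topspace T"
      using closedin_subset[OF C] \<open>z \<in> C\<close> by blast
    ultimately show "w \<in> snd ` (?R \<inter> C \<times> topspace T)"
      by (intro image_eqI[of _ _ "(z, w)"]) auto
  qed auto
  ultimately show ?thesis
    by simp
qed

lemma closed_map_proj: "closed_map T (quot_top T \<gamma>) proj"
  unfolding closed_map_def
proof (intro allI impI)
  fix C assume C: "closedin T C"
  have "{w \<in> topspace T. proj w \<in> proj ` C} = {w \<in> topspace T. \<exists>z\<in>C. \<gamma> z w = 0 \<and> \<gamma> w z = 0}"
  proof (intro Collect_cong conj_cong refl)
    fix w assume "w \<in> topspace T"
    then have "proj w = proj z \<longleftrightarrow> \<gamma> z w = 0 \<and> \<gamma> w z = 0" if "z \<in> C" for z
      using that closedin_subset[OF C] proj_eq_iff[of w z] by auto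
    then show "proj w \<in> proj ` C \<longleftrightarrow> (\<exists>z\<in>C. \<gamma> z w = 0 \<and> \<gamma> w z = 0)"
      unfolding image_iff by blast
  qed
  then have "closedin T {w \<in> topspace T. proj w \<in> proj ` C}"
    using closedin_saturation[OF C] by simp
  moreover have "proj ` C \<subseteq> topspace (quot_top T \<gamma>)"
    using closedin_subset[OF C] by (auto simp: topspace_quot_top)
  ultimately show "closedin (quot_top T \<gamma>) (proj ` C)"
    using quotient_map_qclass[of T \<gamma>] unfolding quotient_map_closedin by blast
qed

lemma continuous_map_proj: "continuous_map T (quot_top T \<gamma>) proj"
  by (rule quotient_imp_continuous_map[OF quotient_map_qclass])

lemma compact_space_quot_top: "compact_space (quot_top T \<gamma>)"
  using image_compactin[OF compact[unfolded compact_space_def] continuous_map_proj]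
  unfolding compact_space_def topspace_quot_top .

lemma Hausdorff_space_quot_top: "Hausdorff_space (quot_top T \<gamma>)"
proof (rule Hausdorff_normal_space_closed_continuous_map_image)
  show "normal_space T"
    using compact Hausdorff by (simp add: compact_Hausdorff_or_regular_imp_normal_space)
  show "t1_space (quot_top T \<gamma>)"
    by (rule t1_space_closed_map_image[OF closed_map_proj _ Hausdorff_imp_t1_space[OF Hausdorff]])
      (simp add: topspace_quot_top)
qed (simp_all add: closed_map_proj continuous_map_proj topspace_quot_top)

lemma metric_continuous_quot_met: "metric_continuous (quot_top T \<gamma>) (quot_met \<gamma>)"
  unfolding metric_continuous_def continuous_map_upper_ennreal_iff_closedin
proof
  fix u
  let ?TQ = "quot_top T \<gamma>"
  let ?F = "{p \<in> topspace (prod_topology T T). \<gamma> (fst p) (snd p) \<le> u}"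
  let ?m = "\<lambda>p. (proj (fst p), proj (snd p))"
  have "continuous_map (prod_topology T T) (prod_topology ?TQ ?TQ) ?m"
    using continuous_map_proj
    by (intro continuous_map_pairedI) (simp_all add: continuous_map_of_fst[unfolded o_def] continuous_map_of_snd[unfolded o_def])
  then have "closed_map (prod_topology T T) (prod_topology ?TQ ?TQ) ?m"
    using compact Hausdorff_space_quot_top
    by (intro continuous_imp_closed_map) (simp_all add: compact_space_prod_topology Hausdorff_space_prod_topology)
  moreover have "closedin (prod_topology T T) ?F"
    using metric_continuous_compose[OF continuous continuous_map_fst continuous_map_snd]
    unfolding continuous_map_upper_ennreal_iff_closedin by blast
  ultimately have "closedin (prod_topology ?TQ ?TQ) (?m ` ?F)"
    unfolding closed_map_def by blast
  moreover have "(proj z, proj w) \<in> ?m ` ?F" if "z \<in> topspace T" "w \<in> topspace T" "\<gamma> z w \<le> u" for z w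
    using that by (intro image_eqI[of _ _ "(z, w)"]) auto
  then have "?m ` ?F = {p \<in> topspace (prod_topology ?TQ ?TQ). (\<lambda>(c, c'). quot_met \<gamma> c c') p \<le> u}"
    by (auto simp: topspace_quot_top quot_met_proj)
  ultimately show "closedin (prod_topology ?TQ ?TQ)
      {p \<in> topspace (prod_topology ?TQ ?TQ). (\<lambda>(c, c'). quot_met \<gamma> c c') p \<le> u}"
    by simp
qed

lemma metCH_sep_quot_top: "metCH_sep (quot_top T \<gamma>) (quot_met \<gamma>)"
  unfolding metCH_sep_def is_metric_on_def topspace_quot_top
  using compact_space_quot_top Hausdorff_space_quot_top metric_continuous_quot_met
  by (auto simp: quot_met_proj proj_eq_iff metric_triangle)

lemma quotient_lift:
  assumes Y: "metCH_sep TY dY" and \<phi>: "continuous_map T TY \<phi>"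
    and le: "\<And>z w. z \<in> topspace T \<Longrightarrow> w \<in> topspace T \<Longrightarrow> dY (\<phi> z) (\<phi> w) \<le> \<gamma> z w"
  obtains u where "met_morphism (quot_top T \<gamma>) (quot_met \<gamma>) TY dY u"
    and "\<And>z. z \<in> topspace T \<Longrightarrow> u (proj z) = \<phi> z"
proof -
  have const_on_classes: "\<phi> z = \<phi> w" if "z \<in> topspace T" "w \<in> topspace T" "proj z = proj w" for z w
  proof -
    have "dY (\<phi> z) (\<phi> w) = 0" "dY (\<phi> w) (\<phi> z) = 0"
      using that le[of z w] le[of w z] by (simp_all add: proj_eq_iff)
    moreover have "\<phi> z \<in> topspace TY" "\<phi> w \<in> topspace TY"
      using that continuous_map_image_subset_topspace[OF \<phi>] by auto
    ultimately show ?thesis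
      using Y unfolding metCH_sep_def by blast
  qed
  obtain u where u: "continuous_map (quot_top T \<gamma>) TY u"
    and "u ` topspace (quot_top T \<gamma>) = \<phi> ` topspace T" and u_proj: "\<And>z. z \<in> topspace T \<Longrightarrow> u (proj z) = \<phi> z"
    using quotient_map_lift_exists[OF quotient_map_qclass[of T \<gamma>] \<phi> const_on_classes] by blast
  have "met_morphism (quot_top T \<gamma>) (quot_met \<gamma>) TY dY u"
    unfolding met_morphism_def topspace_quot_top using u le by (auto simp: u_proj quot_met_proj)
  with u_proj that show ?thesis
    by blast
qed

lemma met_morphism_proj_comp:
  assumes \<phi>: "continuous_map S T \<phi>"
    and le: "\<And>s s'. s \<in> topspace S \<Longrightarrow> s' \<in> topspace S \<Longrightarrow> \<gamma> (\<phi> s) (\<phi> s') \<le> e s s'"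
  shows "met_morphism S e (quot_top T \<gamma>) (quot_met \<gamma>) (\<lambda>s. proj (\<phi> s))"
  unfolding met_morphism_def
proof (intro conjI ballI)
  show "continuous_map S (quot_top T \<gamma>) (\<lambda>s. proj (\<phi> s))"
    using continuous_map_compose[OF \<phi> continuous_map_proj] by (simp add: o_def)
  fix s s' assume "s \<in> topspace S" "s' \<in> topspace S"
  moreover have "\<phi> s \<in> topspace T" "\<phi> s' \<in> topspace T"
    using calculation continuous_map_image_subset_topspace[OF \<phi>] by auto
  ultimately show "quot_met \<gamma> (proj (\<phi> s)) (proj (\<phi> s')) \<le> e s s'"
    by (simp add: quot_met_proj le)
qed

end

section \<open>Gluing along an embedding\<close>

locale metCH_span =
  fixes TA :: "'a topology" and dA :: "'a \<Rightarrow> 'a \<Rightarrow> ennreal"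
    and TB :: "'b topology" and dB :: "'b \<Rightarrow> 'b \<Rightarrow> ennreal"
    and TX :: "'x topology" and dX :: "'x \<Rightarrow> 'x \<Rightarrow> ennreal"
    and i :: "'a \<Rightarrow> 'x" and f :: "'a \<Rightarrow> 'b"
  assumes A: "metCH_sep TA dA" and B: "metCH_sep TB dB" and X: "metCH_sep TX dX"
    and i: "met_embedding TA dA TX dX i"
    and f: "met_morphism TA dA TB dB f"
begin

abbreviation Z :: "('b + 'x) topology" where
  "Z \<equiv> coprod_top TB TX"

abbreviation \<gamma> :: "'b + 'x \<Rightarrow> 'b + 'x \<Rightarrow> ennreal" where
  "\<gamma> \<equiv> gamma_po (topspace TA) dA dB dX f i"

lemmas dB_self = metCH_sep_self[OF B]
lemmas dX_self = metCH_sep_self[OF X]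
lemmas dB_triangle = metCH_sep_triangle[OF B]
lemmas dX_triangle = metCH_sep_triangle[OF X]

lemma i_morphism: "met_morphism TA dA TX dX i"
  using i by (simp add: met_embedding_def)

lemma i_in: "a \<in> topspace TA \<Longrightarrow> i a \<in> topspace TX"
  using i_morphism by (rule met_morphism_in_topspace)

lemma f_in: "a \<in> topspace TA \<Longrightarrow> f a \<in> topspace TB"
  using f by (rule met_morphism_in_topspace)

lemma f_le_i: "a \<in> topspace TA \<Longrightarrow> a' \<in> topspace TA \<Longrightarrow> dB (f a) (f a') \<le> dX (i a) (i a')"
  using met_morphism_le[OF f] i unfolding met_embedding_def by simp

definition dist_to_glue :: "'b + 'x \<Rightarrow> 'a \<Rightarrow> ennreal" where
  "dist_to_glue z a = (case z of Inl b \<Rightarrow> dB b (f a) | Inr x \<Rightarrow> dX x (i a))"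

definition dist_from_glue :: "'a \<Rightarrow> 'b + 'x \<Rightarrow> ennreal" where
  "dist_from_glue a z = (case z of Inl b \<Rightarrow> dB (f a) b | Inr x \<Rightarrow> dX (i a) x)"

definition detour :: "'b + 'x \<Rightarrow> 'b + 'x \<Rightarrow> ennreal" where
  "detour z w = (INF a\<in>topspace TA. INF a'\<in>topspace TA.
     dist_to_glue z a + dB (f a) (f a') + dist_from_glue a' w)"

lemma detour_le:
  "a \<in> topspace TA \<Longrightarrow> a' \<in> topspace TA \<Longrightarrow>
    detour z w \<le> dist_to_glue z a + dB (f a) (f a') + dist_from_glue a' w"
  unfolding detour_def by (blast intro: INF_lower2)

lemma le_add_detour:
  assumes "\<And>a a'. a \<in> topspace TA \<Longrightarrow> a' \<in> topspace TA \<Longrightarrow>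
    y \<le> c + (dist_to_glue z a + dB (f a) (f a') + dist_from_glue a' w)"
  shows "y \<le> c + detour z w"
  unfolding detour_def using assms by (intro le_add_INF_ennreal)

lemma le_detour_add:
  assumes "\<And>a a'. a \<in> topspace TA \<Longrightarrow> a' \<in> topspace TA \<Longrightarrow>
    y \<le> (dist_to_glue z a + dB (f a) (f a') + dist_from_glue a' w) + c"
  shows "y \<le> detour z w + c"
  unfolding detour_def using assms by (intro le_INF_add_ennreal)

lemma coprod_met_triangle:
  assumes "z \<in> topspace Z" "v \<in> topspace Z" "w \<in> topspace Z"
  shows "coprod_met dB dX z w \<le> coprod_met dB dX z v + coprod_met dB dX v w"
proof -
  have "is_metric_on (topspace Z) (coprod_met dB dX)"
    unfolding topspace_coprod_top using B X by (intro is_metric_on_coprod_met) (simp_all add: metCH_sep_def)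
  with assms show ?thesis
    unfolding is_metric_on_def by blast
qed

lemma dB_le_detour:
  assumes "b \<in> topspace TB" and "b' \<in> topspace TB"
  shows "dB b b' \<le> detour (Inl b) (Inl b')"
  unfolding detour_def dist_to_glue_def dist_from_glue_def sum.case
proof (intro INF_greatest)
  fix a a' assume a: "a \<in> topspace TA" "a' \<in> topspace TA"
  have "dB b b' \<le> dB b (f a) + dB (f a) b'"
    using assms a by (intro dB_triangle f_in)
  also have "\<dots> \<le> dB b (f a) + (dB (f a) (f a') + dB (f a') b')"
    using assms a by (intro add_left_mono dB_triangle f_in)
  finally show "dB b b' \<le> dB b (f a) + dB (f a) (f a') + dB (f a') b'"
    by (simp add: add.assoc)
qed

(* For mixed pairs the double infimum collapses onto its diagonal by the triangle inequality in B. *)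
lemma detour_Inl_Inr:
  assumes "b \<in> topspace TB"
  shows "detour (Inl b) (Inr x) = \<gamma> (Inl b) (Inr x)"
proof -
  have "detour (Inl b) (Inr x) = (INF a\<in>topspace TA. dB b (f a) + dB (f a) (f a) + dX (i a) x)"
    unfolding detour_def dist_to_glue_def dist_from_glue_def sum.case
  proof (rule INF_INF_eq_INF_diagonal)
    fix a a' assume a: "a \<in> topspace TA" "a' \<in> topspace TA"
    have "dB b (f a') + dB (f a') (f a') \<le> dB b (f a) + dB (f a) (f a')"
      using a assms by (simp add: dB_self f_in dB_triangle)
    with a show "\<exists>a''\<in>topspace TA. dB b (f a'') + dB (f a'') (f a'') + dX (i a'') x \<le>
        dB b (f a) + dB (f a) (f a') + dX (i a') x"
      by (intro bexI[of _ a'] add_right_mono)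
  qed
  also have "\<dots> = \<gamma> (Inl b) (Inr x)"
    by (auto simp: dB_self f_in intro: INF_cong)
  finally show ?thesis .
qed

lemma detour_Inr_Inl:
  assumes "b \<in> topspace TB"
  shows "detour (Inr x) (Inl b) = \<gamma> (Inr x) (Inl b)"
proof -
  have "detour (Inr x) (Inl b) = (INF a\<in>topspace TA. dX x (i a) + dB (f a) (f a) + dB (f a) b)"
    unfolding detour_def dist_to_glue_def dist_from_glue_def sum.case
  proof (rule INF_INF_eq_INF_diagonal)
    fix a a' assume a: "a \<in> topspace TA" "a' \<in> topspace TA"
    have "dB (f a) (f a) + dB (f a) b \<le> dB (f a) (f a') + dB (f a') b"
      using a assms by (simp add: dB_self f_in dB_triangle)
    with a show "\<exists>a''\<in>topspace TA. dX x (i a'') + dB (f a'') (f a'') + dB (f a'') b \<le>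
        dX x (i a) + dB (f a) (f a') + dB (f a') b"
      by (intro bexI[of _ a]) (simp add: add.assoc add_left_mono)
  qed
  also have "\<dots> = \<gamma> (Inr x) (Inl b)"
    by (auto simp: dB_self f_in intro: INF_cong)
  finally show ?thesis .
qed

lemma gamma_po_eq_min_detour:
  assumes "z \<in> topspace Z" and "w \<in> topspace Z"
  shows "\<gamma> z w = min (coprod_met dB dX z w) (detour z w)"
proof (cases z; cases w)
  fix b b' assume "z = Inl b" "w = Inl b'"
  with assms show ?thesis
    by (auto simp: topspace_coprod_top min_absorb1 dB_le_detour)
next
  fix b x assume "z = Inl b" "w = Inr x"
  with assms show ?thesis
    by (auto simp: topspace_coprod_top detour_Inl_Inr)
next
  fix x b assume "z = Inr x" "w = Inl b"
  with assms show ?thesis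
    by (auto simp: topspace_coprod_top detour_Inr_Inl)
next
  fix x x' assume "z = Inr x" "w = Inr x'"
  then show ?thesis
    by (simp add: detour_def dist_to_glue_def dist_from_glue_def)
qed

lemma dist_to_glue_triangle:
  assumes "z \<in> topspace Z" "v \<in> topspace Z" "a \<in> topspace TA"
  shows "dist_to_glue z a \<le> coprod_met dB dX z v + dist_to_glue v a"
  using assms by (cases z; cases v) (auto simp: dist_to_glue_def topspace_coprod_top
      intro: dB_triangle dX_triangle f_in i_in)

lemma dist_from_glue_triangle:
  assumes "w \<in> topspace Z" "v \<in> topspace Z" "a \<in> topspace TA"
  shows "dist_from_glue a w \<le> dist_from_glue a v + coprod_met dB dX v w"
  using assms by (cases w; cases v) (auto simp: dist_from_glue_def topspace_coprod_top
      intro: dB_triangle dX_triangle f_in i_in)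

lemma dist_glue_le_through:
  assumes "v \<in> topspace Z" "a \<in> topspace TA" "a' \<in> topspace TA"
  shows "dB (f a) (f a') \<le> dist_from_glue a v + dist_to_glue v a'"
proof (cases v)
  case (Inl b)
  with assms show ?thesis
    by (auto simp: dist_from_glue_def dist_to_glue_def topspace_coprod_top intro: dB_triangle f_in)
next
  case (Inr x)
  with assms have "x \<in> topspace TX"
    by (auto simp: topspace_coprod_top)
  have "dB (f a) (f a') \<le> dX (i a) (i a')"
    using assms(2,3) by (rule f_le_i)
  also have "\<dots> \<le> dX (i a) x + dX x (i a')"
    using assms(2,3) \<open>x \<in> topspace TX\<close> by (intro dX_triangle i_in)
  finally show ?thesis
    using Inr by (simp add: dist_from_glue_def dist_to_glue_def)
qed

lemma detour_triangle_left:
  assumes "z \<in> topspace Z" "v \<in> topspace Z"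
  shows "detour z w \<le> coprod_met dB dX z v + detour v w"
proof (rule le_add_detour)
  fix a a' assume a: "a \<in> topspace TA" "a' \<in> topspace TA"
  have "detour z w \<le> dist_to_glue z a + dB (f a) (f a') + dist_from_glue a' w"
    using a by (rule detour_le)
  also have "\<dots> \<le> (coprod_met dB dX z v + dist_to_glue v a) + dB (f a) (f a') + dist_from_glue a' w"
    using assms a by (intro add_right_mono dist_to_glue_triangle)
  finally show "detour z w \<le> coprod_met dB dX z v + (dist_to_glue v a + dB (f a) (f a') + dist_from_glue a' w)"
    by (simp add: ac_simps)
qed

lemma detour_triangle_right:
  assumes "w \<in> topspace Z" "v \<in> topspace Z"
  shows "detour z w \<le> detour z v + coprod_met dB dX v w"
proof (rule le_detour_add)
  fix a a' assume a: "a \<in> topspace TA" "a' \<in> topspace TA"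
  have "detour z w \<le> dist_to_glue z a + dB (f a) (f a') + dist_from_glue a' w"
    using a by (rule detour_le)
  also have "\<dots> \<le> dist_to_glue z a + dB (f a) (f a') + (dist_from_glue a' v + coprod_met dB dX v w)"
    using assms a by (intro add_left_mono dist_from_glue_triangle)
  finally show "detour z w \<le> (dist_to_glue z a + dB (f a) (f a') + dist_from_glue a' v) + coprod_met dB dX v w"
    by (simp add: ac_simps)
qed

lemma detour_triangle:
  assumes "v \<in> topspace Z"
  shows "detour z w \<le> detour z v + detour v w"
proof (rule le_detour_add)
  fix a1 a2 assume a12: "a1 \<in> topspace TA" "a2 \<in> topspace TA"
  show "detour z w \<le> (dist_to_glue z a1 + dB (f a1) (f a2) + dist_from_glue a2 v) + detour v w"
  proof (rule le_add_detour)
    fix a3 a4 assume a34: "a3 \<in> topspace TA" "a4 \<in> topspace TA"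
    have "dB (f a1) (f a4) \<le> dB (f a1) (f a2) + dB (f a2) (f a4)"
      using a12 a34 by (intro dB_triangle f_in)
    also have "\<dots> \<le> dB (f a1) (f a2) + (dB (f a2) (f a3) + dB (f a3) (f a4))"
      using a12 a34 by (intro add_left_mono dB_triangle f_in)
    also have "\<dots> \<le> dB (f a1) (f a2) + ((dist_from_glue a2 v + dist_to_glue v a3) + dB (f a3) (f a4))"
      using assms a12 a34 by (intro add_left_mono add_right_mono dist_glue_le_through)
    finally have bridge: "dB (f a1) (f a4) \<le>
        dB (f a1) (f a2) + ((dist_from_glue a2 v + dist_to_glue v a3) + dB (f a3) (f a4))" .
    have "detour z w \<le> dist_to_glue z a1 + dB (f a1) (f a4) + dist_from_glue a4 w"
      using a12(1) a34(2) by (rule detour_le)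
    also have "\<dots> \<le> dist_to_glue z a1 +
        (dB (f a1) (f a2) + ((dist_from_glue a2 v + dist_to_glue v a3) + dB (f a3) (f a4))) + dist_from_glue a4 w"
      using bridge by (intro add_left_mono add_right_mono)
    also have "\<dots> = (dist_to_glue z a1 + dB (f a1) (f a2) + dist_from_glue a2 v) +
        (dist_to_glue v a3 + dB (f a3) (f a4) + dist_from_glue a4 w)"
      by (simp add: ac_simps)
    finally show "detour z w \<le> (dist_to_glue z a1 + dB (f a1) (f a2) + dist_from_glue a2 v) +
        (dist_to_glue v a3 + dB (f a3) (f a4) + dist_from_glue a4 w)" .
  qed
qed

lemma gamma_po_triangle:
  assumes "z \<in> topspace Z" "v \<in> topspace Z" "w \<in> topspace Z"
  shows "\<gamma> z w \<le> \<gamma> z v + \<gamma> v w"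
  unfolding gamma_po_eq_min_detour[OF assms(1,3)] gamma_po_eq_min_detour[OF assms(1,2)]
    gamma_po_eq_min_detour[OF assms(2,3)]
  using assms
  by (intro le_min_add_min min.coboundedI1 min.coboundedI2 coprod_met_triangle detour_triangle_left
      detour_triangle_right detour_triangle)

lemma gamma_po_le_coprod_met: "\<gamma> z w \<le> coprod_met dB dX z w"
  by (cases z; cases w) simp_all

lemma gamma_po_self: "z \<in> topspace Z \<Longrightarrow> \<gamma> z z = 0"
  by (cases z) (auto simp: topspace_coprod_top dB_self dX_self)

lemma dB_continuous: "metric_continuous TB dB"
  and dX_continuous: "metric_continuous TX dX"
  and f_continuous: "continuous_map TA TB f"
  and i_continuous: "continuous_map TA TX i"
  using B X f i_morphism by (simp_all add: metCH_sep_def met_morphism_def)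

lemma compact_space_TA: "compact_space TA"
  using A by (simp add: metCH_sep_def)

lemma gamma_po_Inl_Inr_continuous:
  "continuous_map (prod_topology TB TX) upper_ennreal (\<lambda>(b, x). \<gamma> (Inl b) (Inr x))"
proof -
  have "continuous_map (prod_topology (prod_topology TB TX) TA) upper_ennreal
      (\<lambda>q. dB ((fst \<circ> fst) q) ((f \<circ> snd) q) + dX ((i \<circ> snd) q) ((snd \<circ> fst) q))"
    by (intro continuous_map_upper_ennreal_add metric_continuous_compose[OF dB_continuous]
        metric_continuous_compose[OF dX_continuous]
        continuous_map_compose[OF continuous_map_fst continuous_map_fst]
        continuous_map_compose[OF continuous_map_fst continuous_map_snd]
        continuous_map_compose[OF continuous_map_snd f_continuous]
        continuous_map_compose[OF continuous_map_snd i_continuous])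
  then have "continuous_map (prod_topology TB TX) upper_ennreal
      (\<lambda>p. INF a\<in>topspace TA. dB (fst p) (f a) + dX (i a) (snd p))"
    by (intro continuous_map_upper_ennreal_INF[OF compact_space_TA]) (simp add: o_def case_prod_unfold)
  then show ?thesis
    by (simp add: case_prod_unfold)
qed

lemma gamma_po_Inr_Inl_continuous:
  "continuous_map (prod_topology TX TB) upper_ennreal (\<lambda>(x, b). \<gamma> (Inr x) (Inl b))"
proof -
  have "continuous_map (prod_topology (prod_topology TX TB) TA) upper_ennreal
      (\<lambda>q. dX ((fst \<circ> fst) q) ((i \<circ> snd) q) + dB ((f \<circ> snd) q) ((snd \<circ> fst) q))"
    by (intro continuous_map_upper_ennreal_add metric_continuous_compose[OF dB_continuous]
        metric_continuous_compose[OF dX_continuous]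
        continuous_map_compose[OF continuous_map_fst continuous_map_fst]
        continuous_map_compose[OF continuous_map_fst continuous_map_snd]
        continuous_map_compose[OF continuous_map_snd f_continuous]
        continuous_map_compose[OF continuous_map_snd i_continuous])
  then have "continuous_map (prod_topology TX TB) upper_ennreal
      (\<lambda>p. INF a\<in>topspace TA. dX (fst p) (i a) + dB (f a) (snd p))"
    by (intro continuous_map_upper_ennreal_INF[OF compact_space_TA]) (simp add: o_def case_prod_unfold)
  then show ?thesis
    by (simp add: case_prod_unfold)
qed

lemma gamma_po_Inr_Inr_continuous:
  "continuous_map (prod_topology TX TX) upper_ennreal (\<lambda>(x, x'). \<gamma> (Inr x) (Inr x'))"
proof -
  have "continuous_map (prod_topology (prod_topology TX TX) (prod_topology TA TA)) upper_ennreal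
      (\<lambda>q. dX ((fst \<circ> fst) q) ((i \<circ> fst \<circ> snd) q) + dB ((f \<circ> fst \<circ> snd) q) ((f \<circ> snd \<circ> snd) q)
        + dX ((i \<circ> snd \<circ> snd) q) ((snd \<circ> fst) q))"
    by (intro continuous_map_upper_ennreal_add metric_continuous_compose[OF dB_continuous]
        metric_continuous_compose[OF dX_continuous]
        continuous_map_compose[OF continuous_map_fst continuous_map_fst]
        continuous_map_compose[OF continuous_map_fst continuous_map_snd]
        continuous_map_compose[OF continuous_map_snd continuous_map_compose[OF continuous_map_fst f_continuous]]
        continuous_map_compose[OF continuous_map_snd continuous_map_compose[OF continuous_map_snd f_continuous]]
        continuous_map_compose[OF continuous_map_snd continuous_map_compose[OF continuous_map_fst i_continuous]]
        continuous_map_compose[OF continuous_map_snd continuous_map_compose[OF continuous_map_snd i_continuous]])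
  then have "continuous_map (prod_topology TX TX) upper_ennreal
      (\<lambda>p. INF a\<in>topspace (prod_topology TA TA).
        dX (fst p) (i (fst a)) + dB (f (fst a)) (f (snd a)) + dX (i (snd a)) (snd p))"
    using compact_space_TA by (intro continuous_map_upper_ennreal_INF)
      (simp_all add: o_def case_prod_unfold compact_space_prod_topology)
  then have "continuous_map (prod_topology TX TX) upper_ennreal
      (\<lambda>p. min (dX (fst p) (snd p)) (INF a\<in>topspace TA. INF a'\<in>topspace TA.
        dX (fst p) (i a) + dB (f a) (f a') + dX (i a') (snd p)))"
    using dX_continuous unfolding metric_continuous_def
    by (intro continuous_map_upper_ennreal_min) (simp_all add: INF_Sigma case_prod_unfold)
  then show ?thesis
    by (simp add: case_prod_unfold)
qed

lemma gamma_po_continuous: "metric_continuous Z \<gamma>"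
  unfolding metric_continuous_def
  using dB_continuous gamma_po_Inl_Inr_continuous gamma_po_Inr_Inl_continuous gamma_po_Inr_Inr_continuous
  by (intro continuous_map_prod_coprod_top) (simp_all add: metric_continuous_def)

lemma gamma_po_submetric: "continuous_submetric Z (coprod_met dB dX) \<gamma>"
  unfolding continuous_submetric_def is_metric_on_def
  using gamma_po_self gamma_po_triangle gamma_po_continuous gamma_po_le_coprod_met by blast

end

sublocale metCH_span \<subseteq> quotient: compact_pseudometric_space "coprod_top TB TX" "gamma_po (topspace TA) dA dB dX f i"
proof
  show "compact_space Z" "Hausdorff_space Z"
    using B X by (simp_all add: metCH_sep_def compact_space_coprod_top Hausdorff_space_coprod_top)
  show "is_metric_on (topspace Z) \<gamma>" "metric_continuous Z \<gamma>"
    using gamma_po_submetric by (simp_all add: continuous_submetric_def)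
qed

context metCH_span
begin

lemma met_morphism_class_Inl: "met_morphism TB dB (quot_top Z \<gamma>) (quot_met \<gamma>) (\<lambda>b. quotient.proj (Inl b))"
  by (rule quotient.met_morphism_proj_comp[OF continuous_map_Inl]) simp

lemma met_morphism_class_Inr: "met_morphism TX dX (quot_top Z \<gamma>) (quot_met \<gamma>) (\<lambda>x. quotient.proj (Inr x))"
  by (rule quotient.met_morphism_proj_comp[OF continuous_map_Inr]) simp

lemma class_Inl_f_eq_class_Inr_i:
  assumes a: "a \<in> topspace TA"
  shows "quotient.proj (Inl (f a)) = quotient.proj (Inr (i a))"
proof -
  have "\<gamma> (Inl (f a)) (Inr (i a)) \<le> dB (f a) (f a) + dX (i a) (i a)"
    "\<gamma> (Inr (i a)) (Inl (f a)) \<le> dX (i a) (i a) + dB (f a) (f a)"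
    using a by (auto intro: INF_lower)
  then show ?thesis
    using a by (subst quotient.proj_eq_iff) (simp_all add: topspace_coprod_top f_in i_in dB_self dX_self)
qed

lemma case_sum_le_gamma_po:
  assumes Y: "metCH_sep TY dY" and g: "met_morphism TB dB TY dY g" and h: "met_morphism TX dX TY dY h"
    and gh: "\<forall>a\<in>topspace TA. g (f a) = h (i a)"
    and zw: "z \<in> topspace Z" "w \<in> topspace Z"
  shows "dY (case_sum g h z) (case_sum g h w) \<le> \<gamma> z w"
proof -
  let ?u = "case_sum g h"
  have u_in: "?u v \<in> topspace TY" if "v \<in> topspace Z" for v
    using that met_morphism_in_topspace[OF g] met_morphism_in_topspace[OF h]
    by (auto simp: topspace_coprod_top)
  have glue_in: "g (f a) \<in> topspace TY" if "a \<in> topspace TA" for a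
    using that met_morphism_in_topspace[OF g] f_in by blast
  have to_glue: "dY (?u v) (g (f a)) \<le> dist_to_glue v a" and from_glue: "dY (g (f a)) (?u v) \<le> dist_from_glue a v"
    if "v \<in> topspace Z" "a \<in> topspace TA" for v a
    using that gh met_morphism_le[OF g, of _ "f a"] met_morphism_le[OF g, of "f a"]
      met_morphism_le[OF h, of _ "i a"] met_morphism_le[OF h, of "i a"] f_in i_in
    by (cases v; auto simp: topspace_coprod_top dist_to_glue_def dist_from_glue_def)+
  have "dY (?u z) (?u w) \<le> coprod_met dB dX z w"
    using zw met_morphism_le[OF g] met_morphism_le[OF h] by (auto simp: topspace_coprod_top)
  moreover have "dY (?u z) (?u w) \<le> detour z w"
    unfolding detour_def
  proof (intro INF_greatest)
    fix a a' assume a: "a \<in> topspace TA" "a' \<in> topspace TA"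
    have "dY (?u z) (?u w) \<le> dY (?u z) (g (f a)) + dY (g (f a)) (?u w)"
      using a zw by (intro metCH_sep_triangle[OF Y] u_in glue_in)
    also have "\<dots> \<le> dY (?u z) (g (f a)) + (dY (g (f a)) (g (f a')) + dY (g (f a')) (?u w))"
      using a zw by (intro add_left_mono metCH_sep_triangle[OF Y] u_in glue_in)
    also have "\<dots> \<le> dist_to_glue z a + (dB (f a) (f a') + dist_from_glue a' w)"
      using a zw by (intro add_mono to_glue from_glue met_morphism_le[OF g] f_in)
    finally show "dY (?u z) (?u w) \<le> dist_to_glue z a + dB (f a) (f a') + dist_from_glue a' w"
      by (simp add: add.assoc)
  qed
  ultimately show ?thesis
    using zw by (simp add: gamma_po_eq_min_detour)
qed

lemma pushout_lift:
  assumes Y: "metCH_sep TY dY" and g: "met_morphism TB dB TY dY g" and h: "met_morphism TX dX TY dY h"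
    and gh: "\<forall>a\<in>topspace TA. g (f a) = h (i a)"
  obtains u where "met_morphism (quot_top Z \<gamma>) (quot_met \<gamma>) TY dY u"
    and "\<And>b. b \<in> topspace TB \<Longrightarrow> u (quotient.proj (Inl b)) = g b"
    and "\<And>x. x \<in> topspace TX \<Longrightarrow> u (quotient.proj (Inr x)) = h x"
proof -
  have "continuous_map Z TY (case_sum g h)"
    using g h by (intro continuous_map_case_sum) (simp_all add: met_morphism_def)
  then obtain u where "met_morphism (quot_top Z \<gamma>) (quot_met \<gamma>) TY dY u"
    and "\<And>z. z \<in> topspace Z \<Longrightarrow> u (quotient.proj z) = case_sum g h z"
    using quotient.quotient_lift[OF Y _ case_sum_le_gamma_po[OF Y g h gh]] by blast
  with that show ?thesis
    by (simp add: topspace_coprod_top)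
qed

lemma pushout_universal:
  assumes "metCH_sep TY dY" and "met_morphism TB dB TY dY g" and "met_morphism TX dX TY dY h"
    and "\<forall>a\<in>topspace TA. g (f a) = h (i a)"
  shows "\<exists>u. met_morphism (quot_top Z \<gamma>) (quot_met \<gamma>) TY dY u \<and>
    (\<forall>b\<in>topspace TB. u (quotient.proj (Inl b)) = g b) \<and> (\<forall>x\<in>topspace TX. u (quotient.proj (Inr x)) = h x) \<and>
    (\<forall>u'. met_morphism (quot_top Z \<gamma>) (quot_met \<gamma>) TY dY u' \<and>
      (\<forall>b\<in>topspace TB. u' (quotient.proj (Inl b)) = g b) \<and> (\<forall>x\<in>topspace TX. u' (quotient.proj (Inr x)) = h x) \<longrightarrow>
      (\<forall>c\<in>topspace (quot_top Z \<gamma>). u' c = u c))"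
proof -
  obtain u where "met_morphism (quot_top Z \<gamma>) (quot_met \<gamma>) TY dY u"
    and "\<And>b. b \<in> topspace TB \<Longrightarrow> u (quotient.proj (Inl b)) = g b"
    and "\<And>x. x \<in> topspace TX \<Longrightarrow> u (quotient.proj (Inr x)) = h x"
    using pushout_lift[OF assms] by blast
  moreover have "u' c = u c"
    if "\<forall>b\<in>topspace TB. u' (quotient.proj (Inl b)) = u (quotient.proj (Inl b))"
      and "\<forall>x\<in>topspace TX. u' (quotient.proj (Inr x)) = u (quotient.proj (Inr x))"
      and "c \<in> topspace (quot_top Z \<gamma>)" for u' c
    using that by (auto simp: topspace_quot_top topspace_coprod_top)
  ultimately show ?thesis
    by (intro exI[of _ u]) auto
qed

end

theorem proposition4p1:
  fixes TA :: "'a topology" and dA :: "'a \<Rightarrow> 'a \<Rightarrow> ennreal"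
    and TB :: "'b topology" and dB :: "'b \<Rightarrow> 'b \<Rightarrow> ennreal"
    and TX :: "'x topology" and dX :: "'x \<Rightarrow> 'x \<Rightarrow> ennreal"
    and i :: "'a \<Rightarrow> 'x" and f :: "'a \<Rightarrow> 'b"
  assumes A: "metCH_sep TA dA" and B: "metCH_sep TB dB" and X: "metCH_sep TX dX"
    and i: "met_embedding TA dA TX dX i"
    and f: "met_morphism TA dA TB dB f"
  defines "\<gamma> \<equiv> gamma_po (topspace TA) dA dB dX f i"
    and "TZ \<equiv> coprod_top TB TX"
    and "TQ \<equiv> quot_top (coprod_top TB TX) (gamma_po (topspace TA) dA dB dX f i)"
    and "dQ \<equiv> quot_met (gamma_po (topspace TA) dA dB dX f i)"
    and "jB \<equiv> (\<lambda>b. qclass (topspace (coprod_top TB TX)) (gamma_po (topspace TA) dA dB dX f i) (Inl b))"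
    and "jX \<equiv> (\<lambda>x. qclass (topspace (coprod_top TB TX)) (gamma_po (topspace TA) dA dB dX f i) (Inr x))"
  shows "continuous_submetric TZ (coprod_met dB dX) \<gamma>
    \<and> metCH_sep TQ dQ
    \<and> met_morphism TB dB TQ dQ jB
    \<and> met_morphism TX dX TQ dQ jX
    \<and> (\<forall>a\<in>topspace TA. jB (f a) = jX (i a))
    \<and> (\<forall>(TY :: 'y topology) dY g h.
          metCH_sep TY dY \<and> met_morphism TB dB TY dY g \<and> met_morphism TX dX TY dY h \<and>
          (\<forall>a\<in>topspace TA. g (f a) = h (i a)) \<longrightarrow>
          (\<exists>u. met_morphism TQ dQ TY dY u \<and>
               (\<forall>b\<in>topspace TB. u (jB b) = g b) \<and> (\<forall>x\<in>topspace TX. u (jX x) = h x) \<and>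
               (\<forall>u'. met_morphism TQ dQ TY dY u' \<and>
                  (\<forall>b\<in>topspace TB. u' (jB b) = g b) \<and> (\<forall>x\<in>topspace TX. u' (jX x) = h x) \<longrightarrow>
                  (\<forall>q\<in>topspace TQ. u' q = u q))))"
proof -
  interpret metCH_span TA dA TB dB TX dX i f
    using A B X i f by unfold_locales
  show ?thesis
    unfolding \<gamma>_def TZ_def TQ_def dQ_def jB_def jX_def
    by (intro conjI ballI allI impI gamma_po_submetric quotient.metCH_sep_quot_top met_morphism_class_Inl
        met_morphism_class_Inr class_Inl_f_eq_class_Inr_i) (auto intro: pushout_universal)
qed

end
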